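(* Let $\mu=4m^2>0$ and let $\mathcal{M}(\tilde z,a)$ be a unitary, crossing-symmetric $2\to2$ scattering amplitude of identical scalars of mass $m$ admitting the crossing-symmetric dispersive representation and the power series expansion about $\tilde z=0$ (converging on $|\tilde z|<1$) described in the context. Define $$f(\tilde z,a)=\frac{\mathcal{M}(\tilde z,a)-\alpha_0}{\alpha_1(a)\,a^2},\qquad \alpha_0=\mathcal{M}(0,a).$$ Then for real $a\in\left(-\frac{2\mu}{9},0\right)\cup\left(0,\frac{4\mu}{9}\right)$: (1) $|f(\tilde z,a)|\le\frac{|\tilde z|}{(1-|\tilde z|)^2}$ for all complex $\tilde z$ with $|\tilde z|<1$; (2) $|f(\tilde z,a)|\ge\frac{|\tilde z|}{(1+|\tilde z|)^2}$ for all real $\tilde z$ with $|\tilde z|<1$.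
   Context: Shifted Mandelstam variables $s_1=s-\mu/3$, $s_2=t-\mu/3$, $s_3=u-\mu/3$ satisfy $s_1+s_2+s_3=0$. Crossing-symmetric variables $(z,a)$, $a$ real, are defined by $s_k=a-\frac{a(z-z_k)^3}{z^3-1}$, $k=1,2,3$, with $z_k$ the cube roots of unity, and $\tilde z=z^3$. The amplitude is assumed to satisfy $$\mathcal{M}(\tilde z,a)=\alpha_0+\frac1\pi\int_{2\mu/3}^\infty\frac{ds_1'}{s_1'}\,\mathcal{A}\left(s_1';s_2^{(+)}(s_1',a)\right)H(s_1',\tilde z),$$ where $H(s_1',\tilde z)=\frac{27a^2\tilde z(2s_1'-3a)}{27a^3\tilde z-27a^2\tilde z s_1'-(1-\tilde z)^2(s_1')^3}$, $s_2^{(+)}(s_1',a)=-\frac{s_1'}{2}\left[1-\left(\frac{s_1'+3a}{s_1'-a}\right)^{1/2}\right]$, and $\mathcal{A}(s_1;s_2)$ is the $s$-channel absorptive part; and $\mathcal{M}(\tilde z,a)=\sum_{n\ge0}\alpha_n(a)a^{2n}\tilde z^n$ for $|\tilde z|<1$. Unitarity means: $\mathcal{A}\left(s_1;s_2^{(+)}(s_1,a)\right)=\Phi(s_1;\alpha)\sum_{\ell\ge0}(2\ell+2\alpha)a_\ell(s_1)C_\ell^{(\alpha)}\left(\sqrt{\xi(s_1,a)}\right)$ with $\alpha=(d-3)/2$ ($d$ the spacetime dimension), $\Phi>0$, $C_\ell^{(\alpha)}$ Gegenbauer polynomials, $\xi(s_1,a)=\left(1+\frac{2s_2^{(+)}(s_1,a)+2\mu/3}{s_1-2\mu/3}\right)^2$,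 and $0\le a_\ell(s_1)\le1$ for $s_1\ge2\mu/3$. *)

theory Defs
  imports "HOL-Analysis.Analysis"
begin

fun gegenbauer :: "real \<Rightarrow> nat \<Rightarrow> real \<Rightarrow> real" where
  "gegenbauer \<alpha> 0 x = 1"
| "gegenbauer \<alpha> (Suc 0) x = 2 * \<alpha> * x"
| "gegenbauer \<alpha> (Suc (Suc n)) x =
     (2 * x * (real n + 1 + \<alpha>) * gegenbauer \<alpha> (Suc n) x
      - (real n + 2 * \<alpha>) * gegenbauer \<alpha> n x) / (real n + 2)"

definition s2plus :: "real \<Rightarrow> real \<Rightarrow> real" where
  "s2plus s1 a = - (s1 / 2) * (1 - sqrt ((s1 + 3 * a) / (s1 - a)))"

definition xi :: "real \<Rightarrow> real \<Rightarrow> real \<Rightarrow> real" where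
  "xi \<mu> s1 a = (1 + (2 * s2plus s1 a + 2 * \<mu> / 3) / (s1 - 2 * \<mu> / 3)) ^ 2"

definition Hker :: "real \<Rightarrow> real \<Rightarrow> complex \<Rightarrow> complex" where
  "Hker a s z = (27 * of_real (a^2) * z * of_real (2 * s - 3 * a)) /
     (27 * of_real (a^3) * z - 27 * of_real (a^2) * z * of_real s - (1 - z)^2 * of_real (s^3))"

end

theory Submission
  imports Defs
begin

text \<open>Crossing symmetry turns the dispersion integral into
  \<open>M(z) - \<alpha>\<^sub>0 = -(1/\<pi>) \<integral> w(s) z / (1 - 2 c(s) z + z\<^sup>2) ds\<close>
  with \<open>-1 \<le> c(s) \<le> 1\<close>, and unitarity makes the weight \<open>w\<close> nonnegative, because
  Gegenbauer polynomials with \<open>\<alpha> \<ge> 1/2\<close> are nonnegative at arguments \<open>\<ge> 1\<close>.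
  So \<open>f\<close> is a positive superposition of the kernels \<open>z / (1 - 2 c z + z\<^sup>2)\<close>, normalised
  by its derivative at \<open>0\<close>, i.e. a typically real function in Robertson's representation.
  The bounds then come from \<open>|1 - 2 c z + z\<^sup>2| \<ge> (1 - |z|)\<^sup>2\<close> and, for real \<open>x\<close>,
  \<open>(1 - |x|)\<^sup>2 \<le> 1 - 2 c x + x\<^sup>2 \<le> (1 + |x|)\<^sup>2\<close>.\<close>

lemma eventually_at_0_punctured_unit_interval:
  "eventually (\<lambda>y::real. \<bar>y\<bar> < 1 \<and> y \<noteq> 0) (at 0)"
  by (auto simp: eventually_at intro!: exI[of _ 1])

lemma power_series_difference_quotient_tendsto:
  fixes c :: "nat \<Rightarrow> complex" and g :: "complex \<Rightarrow> complex"
  assumes sums: "\<And>z. cmod z < 1 \<Longrightarrow> (\<lambda>n. c n * z^n) sums g z"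
  shows "((\<lambda>y::real. (g (of_real y) - g 0) / of_real y) \<longlongrightarrow> c 1) (at 0)"
proof -
  have "g 0 = c 0" using sums_unique[OF sums[of 0]] by simp
  have shifted: "(\<lambda>n. c (Suc n) * z^n) sums ((g z - g 0) / z)" if "cmod z < 1" "z \<noteq> 0" for z
  proof -
    have "(\<lambda>n. c (Suc n) * z^(Suc n)) sums (g z - g 0)"
      using sums[OF that(1)] \<open>g 0 = c 0\<close> by (subst sums_Suc_iff) simp
    from sums_mult[OF this, of "1 / z"] show ?thesis using that(2) by (simp add: field_simps)
  qed
  define G where "G z = (\<Sum>n. c (Suc n) * z^n)" for z
  have "summable (\<lambda>n. c (Suc n) * (1/2 :: complex)^n)"
    using shifted[of "1/2"] by (auto simp: sums_iff)
  then have "isCont G 0" unfolding G_def by (rule isCont_powser) simp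
  moreover have "((\<lambda>y::real. complex_of_real y) \<longlongrightarrow> 0) (at 0)"
    by (intro tendsto_eq_intros) auto
  ultimately have "((\<lambda>y::real. G (of_real y)) \<longlongrightarrow> G 0) (at 0)"
    using isCont_tendsto_compose by fastforce
  moreover have "G 0 = c 1" unfolding G_def using powser_zero[of "\<lambda>n. c (Suc n)"] by simp
  moreover have "\<forall>\<^sub>F y in at 0. G (of_real y) = (g (of_real y) - g 0) / of_real y"
    using eventually_at_0_punctured_unit_interval
    by (rule eventually_mono) (use shifted in \<open>auto simp: G_def sums_iff\<close>)
  ultimately show ?thesis using Lim_transform_eventually by fastforce
qed

lemma integrable_on_Ici_iff_Ioi:
  fixes f :: "real \<Rightarrow> 'a::banach"
  shows "f integrable_on {a..} \<longleftrightarrow> f integrable_on {a<..}"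
  by (rule integrable_spike_set_eq) (auto intro: negligible_subset[OF negligible_sing[of a]])

lemma integral_Ici_eq_Ioi:
  fixes f :: "real \<Rightarrow> 'a::banach"
  shows "integral {a..} f = integral {a<..} f"
  by (rule integral_spike_set) (auto intro: negligible_subset[OF negligible_sing[of a]])

definition koebe_kernel :: "real \<Rightarrow> complex \<Rightarrow> complex" where
  "koebe_kernel c z = z / (1 - 2 * complex_of_real c * z + z^2)"

lemma norm_koebe_denominator_ge:
  fixes z :: complex
  assumes "\<bar>c\<bar> \<le> 1" "cmod z < 1"
  shows "(1 - cmod z)^2 \<le> cmod (1 - 2 * complex_of_real c * z + z^2)"
proof -
  define e where "e = cis (arccos c)"
  have norm_e: "cmod e = 1" unfolding e_def by simp
  have "e * cnj e = 1" using complex_norm_square[of e] norm_e by simp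
  moreover have "2 * complex_of_real c = e + cnj e"
    unfolding e_def using assms(1) by (simp add: complex_eq_iff cos_arccos_abs)
  ultimately have factor: "1 - 2 * complex_of_real c * z + z^2 = (1 - z * e) * (1 - z * cnj e)"
    by (simp add: algebra_simps power2_eq_square)
  have "1 - cmod z \<le> cmod (1 - z * e)" "1 - cmod z \<le> cmod (1 - z * cnj e)"
    using norm_triangle_ineq2[of 1 "z * e"] norm_triangle_ineq2[of 1 "z * cnj e"] norm_e
    by (simp_all add: norm_mult)
  then have "(1 - cmod z) * (1 - cmod z) \<le> cmod (1 - z * e) * cmod (1 - z * cnj e)"
    using assms(2) by (intro mult_mono) auto
  then show ?thesis unfolding factor by (simp add: norm_mult power2_eq_square)
qed

lemma koebe_denominator_bounds:
  fixes c x :: real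
  assumes "\<bar>c\<bar> \<le> 1"
  shows "(1 - \<bar>x\<bar>)^2 \<le> 1 - 2 * c * x + x^2" "1 - 2 * c * x + x^2 \<le> (1 + \<bar>x\<bar>)^2"
proof -
  have "\<bar>c * x\<bar> \<le> \<bar>x\<bar>"
    using mult_right_mono[OF assms abs_ge_zero[of x]] by (simp add: abs_mult)
  moreover have "(1 - \<bar>x\<bar>)^2 = 1 - 2 * \<bar>x\<bar> + x^2" "(1 + \<bar>x\<bar>)^2 = 1 + 2 * \<bar>x\<bar> + x^2"
    by (simp_all add: power2_eq_square algebra_simps)
  ultimately show "(1 - \<bar>x\<bar>)^2 \<le> 1 - 2 * c * x + x^2" "1 - 2 * c * x + x^2 \<le> (1 + \<bar>x\<bar>)^2"
    by (simp_all add: abs_le_iff)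
qed

lemma koebe_denominator_pos:
  assumes "\<bar>c\<bar> \<le> 1" "\<bar>x :: real\<bar> < 1"
  shows "0 < 1 - 2 * c * x + x^2"
  using koebe_denominator_bounds(1)[OF assms(1), of x] assms(2)
  by (smt (verit) zero_less_power)

lemma norm_koebe_kernel_le:
  assumes "\<bar>c\<bar> \<le> 1" "cmod z < 1"
  shows "cmod (koebe_kernel c z) \<le> cmod z / (1 - cmod z)^2"
proof -
  have "0 < (1 - cmod z)^2" using assms(2) by simp
  with norm_koebe_denominator_ge[OF assms] show ?thesis
    unfolding koebe_kernel_def norm_divide
    by (intro divide_left_mono mult_pos_pos) auto
qed

lemma koebe_kernel_of_real:
  "koebe_kernel c (complex_of_real x) = complex_of_real (x / (1 - 2 * c * x + x^2))"
  unfolding koebe_kernel_def by simp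

locale typically_real_integral =
  fixes S :: "real set" and w c :: "real \<Rightarrow> real"
  assumes weight_nonneg: "\<And>s. s \<in> S \<Longrightarrow> 0 \<le> w s"
    and abs_param_le_1: "\<And>s. s \<in> S \<Longrightarrow> \<bar>c s\<bar> \<le> 1"
    and kernel_integrable:
      "\<And>z. cmod z < 1 \<Longrightarrow> (\<lambda>s. w s *\<^sub>R koebe_kernel (c s) z) integrable_on S"
begin

definition F :: "complex \<Rightarrow> complex" where
  "F z = integral S (\<lambda>s. w s *\<^sub>R koebe_kernel (c s) z)"

text \<open>The integral of \<open>w\<close> itself, formally \<open>L 0\<close>, is not
  assumed to exist: the normalisation \<open>|F'(0)|\<close> is only reached as the limit of \<open>L y\<close>.\<close>
definition L :: "real \<Rightarrow> real" where
  "L y = integral S (\<lambda>s. w s / (1 - 2 * c s * y + y^2))"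

lemma L_integrable:
  assumes "\<bar>y\<bar> < 1" "y \<noteq> 0"
  shows "(\<lambda>s. w s / (1 - 2 * c s * y + y^2)) integrable_on S"
proof -
  have "(Re \<circ> (\<lambda>s. w s *\<^sub>R koebe_kernel (c s) (of_real y))) integrable_on S"
    using kernel_integrable[of "of_real y"] assms(1)
    by (intro integrable_linear bounded_linear_Re) auto
  then have "(\<lambda>s. (1 / y) *\<^sub>R (Re \<circ> (\<lambda>s. w s *\<^sub>R koebe_kernel (c s) (of_real y))) s)
      integrable_on S"
    by (rule integrable_cmul)
  then show ?thesis
    by (rule integrable_eq) (use assms(2) in \<open>simp add: koebe_kernel_of_real\<close>)
qed

lemma L_nonneg:
  assumes "\<bar>y\<bar> < 1" "y \<noteq> 0"
  shows "0 \<le> L y"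
  unfolding L_def using weight_nonneg koebe_denominator_pos[OF abs_param_le_1 assms(1)]
  by (intro integral_nonneg[OF L_integrable[OF assms]]) (auto intro: divide_nonneg_pos)

lemma F_of_real:
  assumes "\<bar>y\<bar> < 1"
  shows "F (of_real y) = of_real (y * L y)"
proof (cases "y = 0")
  case False
  have "F (of_real y) = integral S (complex_of_real \<circ> (\<lambda>s. y * (w s / (1 - 2 * c s * y + y^2))))"
    unfolding F_def by (rule integral_cong) (simp add: koebe_kernel_of_real scaleR_conv_of_real mult_ac)
  also have "\<dots> = of_real (integral S (\<lambda>s. y * (w s / (1 - 2 * c s * y + y^2))))"
    using integrable_cmul[OF L_integrable[OF assms False], of y]
    by (intro integral_linear bounded_linear_of_real) simp
  finally show ?thesis
    unfolding L_def using integral_mult[OF L_integrable[OF assms False], of y] by simp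
qed (simp add: F_def koebe_kernel_def)

lemma tendsto_L:
  assumes "((\<lambda>y. F (of_real y) / of_real y) \<longlongrightarrow> \<beta>) (at 0)"
  shows "(L \<longlongrightarrow> cmod \<beta>) (at 0)"
proof -
  have "((\<lambda>y. complex_of_real (L y)) \<longlongrightarrow> \<beta>) (at 0)"
  proof (rule Lim_transform_eventually[OF assms])
    show "\<forall>\<^sub>F y in at 0. F (of_real y) / of_real y = complex_of_real (L y)"
      using eventually_at_0_punctured_unit_interval
      by (rule eventually_mono) (simp add: F_of_real)
  qed
  then have lim_Re: "(L \<longlongrightarrow> Re \<beta>) (at 0)" and "((\<lambda>y. 0) \<longlongrightarrow> Im \<beta>) (at (0::real))"
    using tendsto_Re tendsto_Im by fastforce+
  then have "Im \<beta> = 0" by (simp add: tendsto_const_iff)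
  moreover have "0 \<le> Re \<beta>"
    using eventually_at_0_punctured_unit_interval L_nonneg
    by (intro tendsto_lowerbound[OF lim_Re]) (auto elim: eventually_mono)
  ultimately have "cmod \<beta> = Re \<beta>" by (simp add: cmod_def)
  then show ?thesis using lim_Re by simp
qed

lemma norm_F_le:
  assumes lim: "((\<lambda>y. F (of_real y) / of_real y) \<longlongrightarrow> \<beta>) (at 0)" and z: "cmod z < 1"
  shows "cmod (F z) \<le> cmod \<beta> * (cmod z / (1 - cmod z)^2)"
proof -
  define K where "K y = (1 + \<bar>y\<bar>)^2 * (cmod z / (1 - cmod z)^2)" for y :: real
  have "cmod (F z) \<le> K y * L y" if y: "\<bar>y\<bar> < 1" "y \<noteq> 0" for y
  proof -
    have "cmod (F z) \<le> integral S (\<lambda>s. K y * (w s / (1 - 2 * c s * y + y^2)))"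
      unfolding F_def
    proof (rule integral_norm_bound_integral)
      show "(\<lambda>s. w s *\<^sub>R koebe_kernel (c s) z) integrable_on S" by (rule kernel_integrable[OF z])
      show "(\<lambda>s. K y * (w s / (1 - 2 * c s * y + y^2))) integrable_on S"
        using L_integrable[OF y] by (rule integrable_on_mult_right)
      fix s assume s: "s \<in> S"
      define D where "D = 1 - 2 * c s * y + y^2"
      have D: "0 < D" "D \<le> (1 + \<bar>y\<bar>)^2"
        unfolding D_def using abs_param_le_1[OF s] y(1)
        by (auto intro: koebe_denominator_pos koebe_denominator_bounds)
      have "cmod (w s *\<^sub>R koebe_kernel (c s) z) \<le> w s * (cmod z / (1 - cmod z)^2)"
        using mult_left_mono[OF norm_koebe_kernel_le[OF abs_param_le_1[OF s] z] weight_nonneg[OF s]]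
          weight_nonneg[OF s]
        by simp
      also have "\<dots> = (w s / D) * D * (cmod z / (1 - cmod z)^2)" using D by simp
      also have "\<dots> \<le> (w s / D) * (1 + \<bar>y\<bar>)^2 * (cmod z / (1 - cmod z)^2)"
        using D weight_nonneg[OF s] by (intro mult_right_mono mult_left_mono) auto
      finally show "cmod (w s *\<^sub>R koebe_kernel (c s) z) \<le> K y * (w s / D)"
        by (simp add: K_def mult_ac)
    qed
    then show ?thesis unfolding L_def using integral_mult[OF L_integrable[OF y], of "K y"] by simp
  qed
  moreover have "((\<lambda>y. K y * L y) \<longlongrightarrow> K 0 * cmod \<beta>) (at 0)"
    unfolding K_def by (intro tendsto_intros tendsto_L[OF lim])
  ultimately have "cmod (F z) \<le> K 0 * cmod \<beta>"
    using eventually_at_0_punctured_unit_interval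
    by (intro tendsto_lowerbound) (auto elim: eventually_mono)
  then show ?thesis by (simp add: K_def mult_ac)
qed

lemma norm_F_ge:
  assumes lim: "((\<lambda>y. F (of_real y) / of_real y) \<longlongrightarrow> \<beta>) (at 0)" and x: "\<bar>x\<bar> < 1"
  shows "cmod \<beta> * (\<bar>x\<bar> / (1 + \<bar>x\<bar>)^2) \<le> cmod (F (of_real x))"
proof (cases "x = 0")
  case False
  define K where "K y = (1 - \<bar>y\<bar>)^2 / (1 + \<bar>x\<bar>)^2" for y :: real
  have "K y * L y \<le> L x" if y: "\<bar>y\<bar> < 1" "y \<noteq> 0" for y
  proof -
    have "integral S (\<lambda>s. K y * (w s / (1 - 2 * c s * y + y^2))) \<le> L x"
      unfolding L_def
    proof (rule integral_le)
      show "(\<lambda>s. K y * (w s / (1 - 2 * c s * y + y^2))) integrable_on S"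
        using L_integrable[OF y] by (rule integrable_on_mult_right)
      show "(\<lambda>s. w s / (1 - 2 * c s * x + x^2)) integrable_on S"
        by (rule L_integrable[OF x False])
      fix s assume s: "s \<in> S"
      define Dx Dy where "Dx = 1 - 2 * c s * x + x^2" and "Dy = 1 - 2 * c s * y + y^2"
      have "(1 - \<bar>y\<bar>)^2 \<le> Dy" "Dx \<le> (1 + \<bar>x\<bar>)^2" "0 < Dx" "0 < Dy"
        unfolding Dx_def Dy_def using abs_param_le_1[OF s] x y(1)
        by (auto intro: koebe_denominator_pos koebe_denominator_bounds)
      have "K y * (w s / Dy) = w s * ((1 - \<bar>y\<bar>)^2 / Dy) / (1 + \<bar>x\<bar>)^2"
        unfolding K_def by (simp add: mult_ac)
      also have "\<dots> \<le> w s * 1 / (1 + \<bar>x\<bar>)^2"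
        using \<open>(1 - \<bar>y\<bar>)^2 \<le> Dy\<close> \<open>0 < Dy\<close> weight_nonneg[OF s]
        by (intro divide_right_mono mult_left_mono) auto
      also have "\<dots> \<le> w s / Dx"
        using \<open>Dx \<le> (1 + \<bar>x\<bar>)^2\<close> \<open>0 < Dx\<close> weight_nonneg[OF s] by (simp add: divide_left_mono)
      finally show "K y * (w s / Dy) \<le> w s / Dx" .
    qed
    then show ?thesis unfolding L_def using integral_mult[OF L_integrable[OF y], of "K y"] by simp
  qed
  moreover have "((\<lambda>y. K y * L y) \<longlongrightarrow> K 0 * cmod \<beta>) (at 0)"
    unfolding K_def by (intro tendsto_intros tendsto_L[OF lim]) simp
  ultimately have "cmod \<beta> / (1 + \<bar>x\<bar>)^2 \<le> L x"
    using eventually_at_0_punctured_unit_interval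
    by (intro tendsto_upperbound[where f = "\<lambda>y. K y * L y" and F = "at 0"])
       (auto simp: K_def elim: eventually_mono)
  then have "\<bar>x\<bar> * (cmod \<beta> / (1 + \<bar>x\<bar>)^2) \<le> \<bar>x\<bar> * L x" by (intro mult_left_mono) auto
  then show ?thesis
    using L_nonneg[OF x False] by (simp add: F_of_real[OF x] norm_mult mult_ac)
qed simp

end

lemma gegenbauer_nonneg_mono:
  assumes "\<alpha> \<ge> 1/2" "x \<ge> 1"
  shows "0 \<le> gegenbauer \<alpha> n x \<and> gegenbauer \<alpha> n x \<le> gegenbauer \<alpha> (Suc n) x"
proof (induction n)
  case 0
  have "1 * 1 \<le> 2 * \<alpha> * x" using assms by (intro mult_mono) auto
  then show ?case by simp
next
  case (Suc n)
  let ?a = "gegenbauer \<alpha> n x" and ?b = "gegenbauer \<alpha> (Suc n) x"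
  have "0 \<le> ?b" using Suc by linarith
  then have "2 * (real n + 1 + \<alpha>) * ?b \<le> 2 * x * (real n + 1 + \<alpha>) * ?b"
    using assms by (intro mult_right_mono) auto
  moreover have "(real n + 2 * \<alpha>) * ?a \<le> (real n + 2 * \<alpha>) * ?b"
    using assms Suc by (intro mult_left_mono) auto
  ultimately have "(real n + 2) * ?b \<le> 2 * x * (real n + 1 + \<alpha>) * ?b - (real n + 2 * \<alpha>) * ?a"
    by (simp add: algebra_simps)
  then show ?case using \<open>0 \<le> ?b\<close> by (simp add: field_simps)
qed

lemma partial_wave_sum_nonneg:
  assumes "\<alpha> \<ge> 1/2" "x \<ge> 1" "0 \<le> \<Phi>" "\<And>l. 0 \<le> p l"
    and "(\<lambda>l. \<Phi> * ((2 * real l + 2 * \<alpha>) * p l * gegenbauer \<alpha> l x)) sums A"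
  shows "0 \<le> A"
  using assms gegenbauer_nonneg_mono[OF assms(1,2)]
  by (intro sums_le[OF _ sums_zero assms(5)] mult_nonneg_nonneg) auto

lemma one_minus_sqrt_le:
  assumes "0 \<le> r" "r \<le> 1"
  shows "1 - sqrt r \<le> (1 - r) / (1 + r)"
proof -
  have "r \<le> sqrt r" using assms by (simp add: real_le_rsqrt power2_eq_square mult_left_le)
  have "0 < 1 + sqrt r" using assms by (simp add: add_pos_nonneg)
  then have "1 - sqrt r = (1 - (sqrt r)^2) / (1 + sqrt r)"
    by (simp add: field_simps power2_eq_square)
  also have "\<dots> = (1 - r) / (1 + sqrt r)" using assms by simp
  also have "\<dots> \<le> (1 - r) / (1 + r)"
    using assms \<open>r \<le> sqrt r\<close> by (intro divide_left_mono) auto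
  finally show ?thesis .
qed

lemma s2plus_ge:
  assumes a: "-(2 * \<mu> / 9) < a" "a < 4 * \<mu> / 9" and s: "2 * \<mu> / 3 < s"
  shows "- \<mu> / 3 \<le> s2plus s a"
proof -
  define r where "r = (s + 3 * a) / (s - a)"
  have sa: "0 < s - a" "0 < s + 3 * a" "0 < s + a" using a s by auto
  have s2plus_r: "s2plus s a = - (s / 2) * (1 - sqrt r)" unfolding s2plus_def r_def by simp
  show ?thesis
  proof (cases "0 \<le> a")
    case True
    then have "1 \<le> sqrt r" unfolding r_def using sa by simp
    then have "s * (1 - sqrt r) \<le> 0" using sa by (simp add: mult_nonneg_nonpos)
    then show ?thesis unfolding s2plus_r using s a by simp
  next
    case False
    then have "0 \<le> r" "r \<le> 1" unfolding r_def using sa by (simp_all add: field_simps)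
    then have "1 - sqrt r \<le> (1 - r) / (1 + r)" by (rule one_minus_sqrt_le)
    also have "\<dots> = - 2 * a / (s + a)"
      unfolding r_def using sa by (simp add: divide_simps)
    finally have "s * (1 - sqrt r) \<le> s * (- 2 * a / (s + a))"
      using s a by (intro mult_left_mono) auto
    moreover have "0 \<le> s * (\<mu> + 3 * a) + \<mu> * a"
    proof -
      have "(2 * \<mu> / 3) * (\<mu> + 3 * a) \<le> s * (\<mu> + 3 * a)"
        using a s by (intro mult_right_mono) auto
      moreover have "0 \<le> \<mu> * (2 * \<mu> / 3 + 3 * a)" using a by (intro mult_nonneg_nonneg) auto
      ultimately show ?thesis by (simp add: algebra_simps)
    qed
    then have "s * (- 2 * a / (s + a)) \<le> 2 * \<mu> / 3"
      using sa by (simp add: field_simps)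
    ultimately show ?thesis unfolding s2plus_r by simp
  qed
qed

lemma sqrt_xi_ge_1:
  assumes "-(2 * \<mu> / 9) < a" "a < 4 * \<mu> / 9" "2 * \<mu> / 3 < s"
  shows "1 \<le> sqrt (xi \<mu> s a)"
proof -
  have "0 \<le> (2 * s2plus s a + 2 * \<mu> / 3) / (s - 2 * \<mu> / 3)"
    using s2plus_ge[OF assms] assms(3) by simp
  then show ?thesis unfolding xi_def by simp
qed

definition kernel_weight :: "real \<Rightarrow> real \<Rightarrow> real" where
  "kernel_weight a s = 27 * a^2 * (2 * s - 3 * a) / s^3"

definition crossing_param :: "real \<Rightarrow> real \<Rightarrow> real" where
  "crossing_param a s = 1 - 27 * a^2 * (s - a) / (2 * s^3)"

lemma Hker_eq_koebe_kernel:
  assumes "s \<noteq> 0"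
  shows "Hker a s z = - complex_of_real (kernel_weight a s) * koebe_kernel (crossing_param a s) z"
proof -
  define D where "D = 1 - 2 * complex_of_real (crossing_param a s) * z + z^2"
  have denominator:
    "27 * of_real (a^3) * z - 27 * of_real (a^2) * z * of_real s - (1 - z)^2 * of_real (s^3)
      = - complex_of_real (s^3) * D"
    unfolding D_def crossing_param_def using assms
    by (simp add: field_simps power2_eq_square power3_eq_cube)
  show ?thesis
    unfolding Hker_def koebe_kernel_def denominator D_def[symmetric] kernel_weight_def using assms
    by (simp add: field_simps)
qed

lemma dispersion_integrand_eq:
  assumes "s \<noteq> 0"
  shows "complex_of_real (W / s) * Hker a s z
    = - ((W / s * kernel_weight a s) *\<^sub>R koebe_kernel (crossing_param a s) z)"
  using Hker_eq_koebe_kernel[OF assms] by (simp add: scaleR_conv_of_real)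

lemma abs_crossing_param_le_1:
  assumes "0 < s" "a \<le> s" "0 \<le> s + 3 * a"
  shows "\<bar>crossing_param a s\<bar> \<le> 1"
proof -
  have "4 * s^3 - 27 * a^2 * (s - a) = (2 * s - 3 * a)^2 * (s + 3 * a)"
    by (simp add: algebra_simps power2_eq_square power3_eq_cube)
  then have "27 * a^2 * (s - a) \<le> 4 * s^3"
    using assms by (smt (verit) mult_nonneg_nonneg zero_le_power2)
  moreover have "0 \<le> 27 * a^2 * (s - a)" using assms by simp
  ultimately show ?thesis
    unfolding crossing_param_def using assms by (simp add: abs_le_iff field_simps)
qed

lemma typically_real_integral_dispersion:
  fixes W :: "real \<Rightarrow> real"
  assumes a: "-(2 * \<mu> / 9) < a" "a < 4 * \<mu> / 9"
    and W_nonneg: "\<And>s. 2 * \<mu> / 3 < s \<Longrightarrow> 0 \<le> W s"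
    and integrable: "\<And>z. cmod z < 1 \<Longrightarrow>
      (\<lambda>s. complex_of_real (W s / s) * Hker a s z) integrable_on {2 * \<mu> / 3..}"
  shows "typically_real_integral {2 * \<mu> / 3<..}
    (\<lambda>s. W s / s * kernel_weight a s) (crossing_param a)"
proof
  fix s assume "s \<in> {2 * \<mu> / 3<..}"
  with a W_nonneg[of s] show "0 \<le> W s / s * kernel_weight a s" "\<bar>crossing_param a s\<bar> \<le> 1"
    by (auto simp: kernel_weight_def intro!: abs_crossing_param_le_1)
next
  fix z :: complex assume "cmod z < 1"
  with integrable have "(\<lambda>s. complex_of_real (W s / s) * Hker a s z) integrable_on {2 * \<mu> / 3<..}"
    by (simp add: integrable_on_Ici_iff_Ioi)
  then have "(\<lambda>s. - ((W s / s * kernel_weight a s) *\<^sub>R koebe_kernel (crossing_param a s) z))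
      integrable_on {2 * \<mu> / 3<..}"
    by (rule integrable_eq) (rule dispersion_integrand_eq, use a in auto)
  then show "(\<lambda>s. (W s / s * kernel_weight a s) *\<^sub>R koebe_kernel (crossing_param a s) z)
      integrable_on {2 * \<mu> / 3<..}"
    by (simp add: integrable_neg_iff)
qed

theorem theorem8:
  fixes m \<mu> a :: real
    and d :: nat
    and M :: "complex \<Rightarrow> real \<Rightarrow> complex"
    and \<alpha>c :: "nat \<Rightarrow> real \<Rightarrow> complex"
    and A :: "real \<Rightarrow> real \<Rightarrow> real"
    and \<Phi> :: "real \<Rightarrow> real"
    and pw :: "nat \<Rightarrow> real \<Rightarrow> real"
  assumes mu_def: "\<mu> = 4 * m^2" and mu_pos: "\<mu> > 0"
    and dim: "d \<ge> 4"
    and a_range: "a \<in> {-(2 * \<mu> / 9)<..<0} \<union> {0<..<4 * \<mu> / 9}"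
    \<comment> \<open>crossing-symmetric dispersive representation\<close>
    and disp_int: "\<And>z. cmod z < 1 \<Longrightarrow>
       (\<lambda>s. complex_of_real (A s (s2plus s a) / s) * Hker a s z) integrable_on {2 * \<mu> / 3..}"
    and disp: "\<And>z. cmod z < 1 \<Longrightarrow>
       M z a = \<alpha>c 0 a + complex_of_real (1 / pi) *
         integral {2 * \<mu> / 3..} (\<lambda>s. complex_of_real (A s (s2plus s a) / s) * Hker a s z)"
    \<comment> \<open>power series expansion about z~ = 0\<close>
    and series: "\<And>z. cmod z < 1 \<Longrightarrow>
       (\<lambda>n. \<alpha>c n a * complex_of_real (a ^ (2 * n)) * z ^ n) sums M z a"
    \<comment> \<open>unitarity\<close>
    and Phi_pos: "\<And>s. s \<ge> 2 * \<mu> / 3 \<Longrightarrow> \<Phi> s > 0"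
    and pw_bounds: "\<And>l s. s \<ge> 2 * \<mu> / 3 \<Longrightarrow> 0 \<le> pw l s \<and> pw l s \<le> 1"
    and unitarity: "\<And>s. s > 2 * \<mu> / 3 \<Longrightarrow>
       (\<lambda>l. \<Phi> s * ((2 * real l + 2 * ((real d - 3) / 2)) * pw l s *
              gegenbauer ((real d - 3) / 2) l (sqrt (xi \<mu> s a))))
         sums A s (s2plus s a)"
    \<comment> \<open>f is well defined\<close>
    and alpha1_nz: "\<alpha>c 1 a \<noteq> 0"
  shows "(\<forall>z. cmod z < 1 \<longrightarrow>
            cmod ((M z a - M 0 a) / (\<alpha>c 1 a * complex_of_real (a^2)))
              \<le> cmod z / (1 - cmod z)^2)
       \<and> (\<forall>x::real. \<bar>x\<bar> < 1 \<longrightarrow>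
            cmod ((M (complex_of_real x) a - M 0 a) / (\<alpha>c 1 a * complex_of_real (a^2)))
              \<ge> \<bar>x\<bar> / (1 + \<bar>x\<bar>)^2)"
proof -
  define W where "W s = A s (s2plus s a)" for s
  have a: "-(2 * \<mu> / 9) < a" "a < 4 * \<mu> / 9" "a \<noteq> 0" using a_range by auto
  have "0 \<le> W s" if "2 * \<mu> / 3 < s" for s
    unfolding W_def using dim Phi_pos[of s] pw_bounds[of s] that
    by (intro partial_wave_sum_nonneg[OF _ sqrt_xi_ge_1[OF a(1,2) that] _ _ unitarity]) auto
  then interpret typically_real_integral "{2 * \<mu> / 3<..}"
      "\<lambda>s. W s / s * kernel_weight a s" "crossing_param a"
    using a disp_int by (intro typically_real_integral_dispersion) (auto simp: W_def)
  have M_diff: "M z a - M 0 a = - complex_of_real (1 / pi) * F z" if "cmod z < 1" for z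
  proof -
    have "integral {2 * \<mu> / 3..} (\<lambda>s. complex_of_real (W s / s) * Hker a s z) = - F z"
      unfolding integral_Ici_eq_Ioi F_def integral_neg[symmetric]
      by (rule integral_cong) (rule dispersion_integrand_eq, use mu_pos in auto)
    then show ?thesis using disp[OF that] disp[of 0] by (simp add: W_def Hker_def)
  qed
  define \<beta> where "\<beta> = - pi * (\<alpha>c 1 a * complex_of_real (a^2))"
  have "\<beta> \<noteq> 0" using alpha1_nz a(3) by (simp add: \<beta>_def)
  have "((\<lambda>y. (M (of_real y) a - M 0 a) / of_real y) \<longlongrightarrow> \<alpha>c 1 a * complex_of_real (a^2)) (at 0)"
    using power_series_difference_quotient_tendsto[OF series] by simp
  then have "((\<lambda>y. - pi * ((M (of_real y) a - M 0 a) / of_real y)) \<longlongrightarrow> \<beta>) (at 0)"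
    unfolding \<beta>_def by (rule tendsto_mult_left)
  then have lim: "((\<lambda>y. F (of_real y) / of_real y) \<longlongrightarrow> \<beta>) (at 0)"
    by (rule Lim_transform_eventually)
      (use eventually_at_0_punctured_unit_interval in \<open>auto elim!: eventually_mono simp: M_diff\<close>)
  have "(M z a - M 0 a) / (\<alpha>c 1 a * complex_of_real (a^2)) = F z / \<beta>" if "cmod z < 1" for z
    using M_diff[OF that] by (simp add: \<beta>_def)
  with norm_F_le[OF lim] norm_F_ge[OF lim] \<open>\<beta> \<noteq> 0\<close> show ?thesis
    by (auto simp: norm_divide pos_divide_le_eq pos_le_divide_eq mult_ac)
qed

end
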